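(* Let $H$ be a real Hilbert space, $C\subseteq H$ a nonempty closed convex set with metric projection $P_C$, and $F\colon H\to H$ a mapping that is monotone ($\langle F(x)-F(y),x-y\rangle\ge 0$ for all $x,y\in H$) and Lipschitz continuous with constant $L>0$. Let $S$ be the (assumed nonempty) set of solutions of the variational inequality: find $x^*\in C$ with $\langle F(x^* ),x-x^*\rangle\ge 0$ for all $x\in C$. Choose $x_0=y_0\in H$ and $\lambda\in\bigl(0,\frac{\sqrt2-1}{L}\bigr)$, and define for $n\ge 0$ $$x_{n+1}=P_C(x_n-\lambda F(y_n)),\qquad y_{n+1}=2x_{n+1}-x_n.$$ Let $z\in S$. Then for every $n\ge 2$, $$\|x_{n+1}-z\|^2\le \|x_n-z\|^2-(1-\lambda L(1+\sqrt2))\|x_n-x_{n-1}\|^2+\lambda L\|x_n-y_{n-1}\|^2-(1-\sqrt2\lambda L)\|x_{n+1}-y_n\|^2-2\lambda\langle F(z),y_n-z\rangle.$$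
   Context: $P_C(x)$ denotes the unique nearest point of $C$ to $x$. *)

theory Defs
  imports "HOL-Analysis.Analysis"
begin

definition metric_proj :: "'a::real_normed_vector set \<Rightarrow> 'a \<Rightarrow> 'a" where
  "metric_proj C x = (THE p. p \<in> C \<and> (\<forall>c\<in>C. dist x p \<le> dist x c))"

definition monotone_op :: "('a::real_inner \<Rightarrow> 'a) \<Rightarrow> bool" where
  "monotone_op F \<longleftrightarrow> (\<forall>x y. inner (F x - F y) (x - y) \<ge> 0)"

definition VI_sol :: "'a::real_inner set \<Rightarrow> ('a \<Rightarrow> 'a) \<Rightarrow> 'a set" where
  "VI_sol C F = {xs \<in> C. \<forall>x\<in>C. inner (F xs) (x - xs) \<ge> 0}"

end

theory Submission
  imports Defs
begin

text \<open>The estimate combines three instances of the obtuse-angle characterisation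
  \<open>\<langle>w - P\<^sub>C w, c - P\<^sub>C w\<rangle> \<le> 0\<close> of the projection (for \<open>x\<^sub>n\<^sub>+\<^sub>1\<close> tested at \<open>z\<close>, and for
  \<open>x\<^sub>n\<close> tested at \<open>x\<^sub>n\<^sub>+\<^sub>1\<close> and at \<open>x\<^sub>n\<^sub>-\<^sub>1\<close>, which lies in \<open>C\<close> because \<open>n \<ge> 2\<close>) with
  monotonicity of \<open>F\<close> at \<open>z\<close>, the Lipschitz bound
  \<open>\<parallel>F y\<^sub>n - F y\<^sub>n\<^sub>-\<^sub>1\<parallel> \<le> L (\<parallel>x\<^sub>n - x\<^sub>n\<^sub>-\<^sub>1\<parallel> + \<parallel>x\<^sub>n - y\<^sub>n\<^sub>-\<^sub>1\<parallel>)\<close>, which holds because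
  \<open>y\<^sub>n - x\<^sub>n = x\<^sub>n - x\<^sub>n\<^sub>-\<^sub>1\<close>, and the weighted Young inequality
  \<open>2(a + b)c \<le> (1 + \<surd>2) a\<^sup>2 + b\<^sup>2 + \<surd>2 c\<^sup>2\<close>.\<close>

lemma norm_diff_midpoint:
  fixes a s t :: "'a::real_inner"
  shows "(norm (s - t))\<^sup>2 = 2 * (dist a s)\<^sup>2 + 2 * (dist a t)\<^sup>2 - 4 * (dist a (midpoint s t))\<^sup>2"
proof -
  have "(a - s) + (a - t) = 2 *\<^sub>R (a - midpoint s t)"
    by (simp add: midpoint_def algebra_simps scaleR_2)
  then have "(norm ((a - s) + (a - t)))\<^sup>2 = 4 * (dist a (midpoint s t))\<^sup>2"
    by (simp add: dist_norm power_mult_distrib)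
  then show ?thesis
    unfolding dist_norm power2_norm_eq_inner
    by (simp add: inner_add_left inner_add_right inner_diff_left inner_diff_right inner_commute)
qed

text \<open>In a Hilbert space a minimizing sequence for the distance to a closed convex set is
  Cauchy by the parallelogram law; its limit is a nearest point.\<close>
lemma closest_point_exists_complete:
  fixes C :: "'a::{real_inner, complete_space} set"
  assumes "C \<noteq> {}" "closed C" "convex C"
  obtains p where "p \<in> C" "\<forall>c\<in>C. dist a p \<le> dist a c"
proof -
  define d where "d = infdist a C"
  have d_le: "d \<le> dist a c" if "c \<in> C" for c
    using that unfolding d_def by (rule infdist_le)
  have "\<exists>s\<in>C. dist a s < d + 1 / real (Suc k)" for k
    using assms(1) unfolding d_def infdist_notempty[OF assms(1)]
    by (subst cINF_less_iff[symmetric]) auto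
  then obtain s where s_in: "\<And>k. s k \<in> C" and s_lt: "\<And>k. dist a (s k) < d + 1 / real (Suc k)"
    by metis
  have dist_lim: "(\<lambda>k. dist a (s k)) \<longlonglongrightarrow> d"
  proof (rule tendsto_sandwich)
    show "\<forall>\<^sub>F k in sequentially. d \<le> dist a (s k)" using d_le s_in by simp
    show "\<forall>\<^sub>F k in sequentially. dist a (s k) \<le> d + 1 / real (Suc k)"
      using s_lt by (simp add: less_imp_le)
    show "(\<lambda>k. d + 1 / real (Suc k)) \<longlonglongrightarrow> d"
      using tendsto_add[OF tendsto_const LIMSEQ_Suc[OF lim_const_over_n[of 1]]] by simp
  qed simp
  have "Cauchy s"
  proof (rule metric_CauchyI)
    fix e :: real assume "e > 0"
    have "(\<lambda>k. (dist a (s k))\<^sup>2) \<longlonglongrightarrow> d\<^sup>2" using dist_lim by (intro tendsto_intros)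
    then have "\<forall>\<^sub>F k in sequentially. (dist a (s k))\<^sup>2 < d\<^sup>2 + e\<^sup>2 / 4"
      using \<open>e > 0\<close> by (intro order_tendstoD) auto
    then obtain N where N: "\<And>k. k \<ge> N \<Longrightarrow> (dist a (s k))\<^sup>2 < d\<^sup>2 + e\<^sup>2 / 4"
      unfolding eventually_sequentially by blast
    have "dist (s m) (s n) < e" if "m \<ge> N" "n \<ge> N" for m n
    proof -
      have "midpoint (s m) (s n) \<in> C"
        using convexD[OF assms(3) s_in s_in, of "1/2" "1/2"] by (simp add: midpoint_def scaleR_right_distrib)
      then have "d\<^sup>2 \<le> (dist a (midpoint (s m) (s n)))\<^sup>2"
        using d_le infdist_nonneg unfolding d_def by (intro power_mono) auto
      then have "(dist (s m) (s n))\<^sup>2 < e\<^sup>2"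
        using N[OF that(1)] N[OF that(2)] norm_diff_midpoint[of "s m" "s n" a]
        by (simp add: dist_norm)
      then show ?thesis using \<open>e > 0\<close> by (simp add: power_less_imp_less_base)
    qed
    then show "\<exists>N. \<forall>m\<ge>N. \<forall>n\<ge>N. dist (s m) (s n) < e" by blast
  qed
  then obtain p where lim: "s \<longlonglongrightarrow> p" using Cauchy_convergent convergent_def by blast
  have "dist a p = d"
    using LIMSEQ_unique[OF tendsto_dist[OF tendsto_const lim] dist_lim] .
  then show ?thesis
    using that closed_sequentially[OF assms(2) _ lim] s_in d_le by auto
qed

lemma metric_proj_closest:
  fixes C :: "'a::{real_inner, complete_space} set"
  assumes "C \<noteq> {}" "closed C" "convex C"
  shows "metric_proj C a \<in> C" "\<forall>c\<in>C. dist a (metric_proj C a) \<le> dist a c"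
proof -
  obtain p where p: "p \<in> C" "\<forall>c\<in>C. dist a p \<le> dist a c"
    using closest_point_exists_complete[OF assms] .
  have "\<exists>!p. p \<in> C \<and> (\<forall>c\<in>C. dist a p \<le> dist a c)"
    using p any_closest_point_unique[OF assms(3,2)] by blast
  then have "metric_proj C a \<in> C \<and> (\<forall>c\<in>C. dist a (metric_proj C a) \<le> dist a c)"
    unfolding metric_proj_def by (rule theI')
  then show "metric_proj C a \<in> C" "\<forall>c\<in>C. dist a (metric_proj C a) \<le> dist a c" by auto
qed

lemma metric_proj_inner_le:
  fixes C :: "'a::{real_inner, complete_space} set"
  assumes "C \<noteq> {}" "closed C" "convex C" "c \<in> C"
  shows "inner (a - metric_proj C a) (c - metric_proj C a) \<le> 0"
  using any_closest_point_dot[OF assms(3,2) metric_proj_closest(1)[OF assms(1-3)] assms(4)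
      metric_proj_closest(2)[OF assms(1-3)]] .

lemma inner_diff_polarization:
  fixes a b c :: "'a::real_inner"
  shows "2 * inner (a - b) (c - b) = (norm (a - b))\<^sup>2 + (norm (c - b))\<^sup>2 - (norm (a - c))\<^sup>2"
  using dot_norm_neg[of "a - b" "c - b"] by simp

lemma metric_proj_step_dist:
  fixes C :: "'a::{real_inner, complete_space} set"
  assumes "C \<noteq> {}" "closed C" "convex C" "z \<in> C"
  shows "(norm (metric_proj C (q - d) - z))\<^sup>2
           \<le> (norm (q - z))\<^sup>2 - (norm (metric_proj C (q - d) - q))\<^sup>2
              - 2 * inner d (metric_proj C (q - d) - z)"
proof -
  let ?p = "metric_proj C (q - d)"
  have "inner (q - ?p) (z - ?p) - inner d (z - ?p) \<le> 0"
    using metric_proj_inner_le[OF assms, of "q - d"] by (simp add: inner_diff_left)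
  moreover have "2 * inner (q - ?p) (z - ?p) = (norm (?p - q))\<^sup>2 + (norm (?p - z))\<^sup>2 - (norm (q - z))\<^sup>2"
    using inner_diff_polarization[of q ?p z] by (simp add: norm_minus_commute)
  moreover have "inner d (z - ?p) = - inner d (?p - z)"
    by (simp add: inner_diff_right)
  ultimately show ?thesis by linarith
qed

lemma sqrt2_weighted_young:
  fixes a b c :: real
  shows "2 * ((a + b) * c) \<le> (1 + sqrt 2) * a\<^sup>2 + b\<^sup>2 + sqrt 2 * c\<^sup>2"
proof -
  define r where "r = sqrt 2"
  have "r\<^sup>2 = 2" "r > 1" unfolding r_def by auto
  have "r * ((1 + r) * a\<^sup>2 + b\<^sup>2 + r * c\<^sup>2 - 2 * ((a + b) * c))
      = (a + b - r * c)\<^sup>2 + (r - 1) * ((r + 1) * a - b)\<^sup>2 - (r\<^sup>2 - 2) * (r * a\<^sup>2 - 2 * a * b)"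
    by algebra
  also have "\<dots> = (a + b - r * c)\<^sup>2 + (r - 1) * ((r + 1) * a - b)\<^sup>2"
    using \<open>r\<^sup>2 = 2\<close> by simp
  also have "\<dots> \<ge> 0" using \<open>r > 1\<close> by simp
  finally show ?thesis using \<open>r > 1\<close> unfolding r_def by (simp add: zero_le_mult_iff)
qed

lemma projected_reflected_gradient_step:
  fixes C :: "'a::{real_inner, complete_space} set" and F :: "'a \<Rightarrow> 'a"
  assumes C: "C \<noteq> {}" "closed C" "convex C"
    and mono: "monotone_op F" and lip: "L-lipschitz_on UNIV F" and lam: "lam \<ge> 0"
    and z: "z \<in> C" and r: "r \<in> C"
    and q: "q = metric_proj C (r - lam *\<^sub>R F v)"
    and u: "u = 2 *\<^sub>R q - r"
    and p: "p = metric_proj C (q - lam *\<^sub>R F u)"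
  shows "(norm (p - z))\<^sup>2 \<le> (norm (q - z))\<^sup>2
           - (1 - lam * L * (1 + sqrt 2)) * (norm (q - r))\<^sup>2
           + lam * L * (norm (q - v))\<^sup>2
           - (1 - sqrt 2 * lam * L) * (norm (p - u))\<^sup>2
           - 2 * lam * inner (F z) (u - z)"
proof -
  define a b c where "a = norm (q - r)" and "b = norm (q - v)" and "c = norm (p - u)"
  have pC: "p \<in> C" unfolding p using metric_proj_closest(1)[OF C] .
  have u_q: "u - q = q - r" using u by (simp add: algebra_simps scaleR_2)
  then have r_q: "r - q = - (u - q)" by simp
  have proj_p: "(norm (p - z))\<^sup>2 \<le> (norm (q - z))\<^sup>2 - (norm (p - q))\<^sup>2 - 2 * inner (lam *\<^sub>R F u) (p - z)"
    unfolding p by (rule metric_proj_step_dist[OF C z])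
  have split: "inner (lam *\<^sub>R F u) (p - z) = lam * inner (F u - F v) (p - u)
      + lam * inner (F v) (p - q) - lam * inner (F v) (u - q) + lam * inner (F u) (u - z)"
    by (simp add: inner_diff_left inner_diff_right algebra_simps)
  have proj_q_at_p: "- 2 * (lam * inner (F v) (p - q)) \<le> a\<^sup>2 + (norm (p - q))\<^sup>2 - c\<^sup>2"
  proof -
    have "inner (r - q) (p - q) - lam * inner (F v) (p - q) \<le> 0"
      using metric_proj_inner_le[OF C pC, of "r - lam *\<^sub>R F v"] unfolding q[symmetric]
      by (simp add: inner_diff_left)
    moreover have "inner (r - q) (p - q) = - inner (u - q) (p - q)"
      by (simp only: r_q inner_minus_left)
    moreover have "2 * inner (u - q) (p - q) = a\<^sup>2 + (norm (p - q))\<^sup>2 - c\<^sup>2"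
      using inner_diff_polarization[of u q p] u_q unfolding a_def c_def
      by (simp add: norm_minus_commute[of u p])
    ultimately show ?thesis by linarith
  qed
  have proj_q_at_r: "2 * (lam * inner (F v) (u - q)) \<le> - 2 * a\<^sup>2"
  proof -
    have "inner (r - q) (r - q) - lam * inner (F v) (r - q) \<le> 0"
      using metric_proj_inner_le[OF C r, of "r - lam *\<^sub>R F v"] unfolding q[symmetric]
      by (simp add: inner_diff_left)
    moreover have "inner (r - q) (r - q) = a\<^sup>2"
      unfolding a_def by (simp add: power2_norm_eq_inner norm_minus_commute[of q r])
    moreover have "lam * inner (F v) (r - q) = - (lam * inner (F v) (u - q))"
      by (simp only: r_q inner_minus_right mult_minus_right)
    ultimately show ?thesis by linarith
  qed
  have mono_z: "lam * inner (F z) (u - z) \<le> lam * inner (F u) (u - z)"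
    using mono lam unfolding monotone_op_def
    by (intro mult_left_mono) (metis diff_ge_0_iff_ge inner_diff_left)
  have lip_bound: "- (lam * inner (F u - F v) (p - u)) \<le> lam * L * ((a + b) * c)"
  proof -
    have "u - v = (q - r) + (q - v)" using u_q by (simp add: algebra_simps)
    then have "norm (u - v) \<le> a + b"
      unfolding a_def b_def by (metis norm_triangle_ineq)
    have "- inner (F u - F v) (p - u) \<le> norm (F u - F v) * c"
      using Cauchy_Schwarz_ineq2[of "F u - F v" "p - u"] unfolding c_def by linarith
    also have "\<dots> \<le> L * norm (u - v) * c"
      using lipschitz_onD[OF lip, of u v] unfolding c_def by (simp add: dist_norm mult_right_mono)
    also have "\<dots> \<le> L * ((a + b) * c)"
      using \<open>norm (u - v) \<le> a + b\<close> lipschitz_on_nonneg[OF lip] unfolding c_def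
      by (simp add: mult_left_mono mult_right_mono mult.assoc)
    finally show ?thesis
      using lam by (metis mult.assoc mult_left_mono mult_minus_right)
  qed
  have "(norm (p - z))\<^sup>2 \<le> (norm (q - z))\<^sup>2 - a\<^sup>2 - c\<^sup>2 + lam * L * (2 * ((a + b) * c))
      - 2 * lam * inner (F z) (u - z)"
    using proj_p split proj_q_at_p proj_q_at_r mono_z lip_bound by linarith
  also have "\<dots> \<le> (norm (q - z))\<^sup>2 - a\<^sup>2 - c\<^sup>2
      + lam * L * ((1 + sqrt 2) * a\<^sup>2 + b\<^sup>2 + sqrt 2 * c\<^sup>2) - 2 * lam * inner (F z) (u - z)"
    using sqrt2_weighted_young lam lipschitz_on_nonneg[OF lip] by (simp add: mult_left_mono)
  finally show ?thesis
    unfolding a_def b_def c_def by (simp add: algebra_simps)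
qed

theorem lemma3p2:
  fixes C :: "'a::{real_inner, complete_space} set"
    and F :: "'a \<Rightarrow> 'a" and L lam :: real
    and x y :: "nat \<Rightarrow> 'a" and z :: 'a and n :: nat
  assumes "C \<noteq> {}" and "closed C" and "convex C"
    and "monotone_op F"
    and "L > 0" and "L-lipschitz_on UNIV F"
    and "VI_sol C F \<noteq> {}"
    and "x 0 = y 0"
    and "lam > 0" and "lam < (sqrt 2 - 1) / L"
    and "\<And>k. x (Suc k) = metric_proj C (x k - lam *\<^sub>R F (y k))"
    and "\<And>k. y (Suc k) = 2 *\<^sub>R x (Suc k) - x k"
    and "z \<in> VI_sol C F"
    and "n \<ge> 2"
  shows "(norm (x (Suc n) - z))\<^sup>2 \<le> (norm (x n - z))\<^sup>2
           - (1 - lam * L * (1 + sqrt 2)) * (norm (x n - x (n - 1)))\<^sup>2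
           + lam * L * (norm (x n - y (n - 1)))\<^sup>2
           - (1 - sqrt 2 * lam * L) * (norm (x (Suc n) - y n))\<^sup>2
           - 2 * lam * inner (F z) (y n - z)"
proof -
  have "z \<in> C" using assms(13) unfolding VI_sol_def by simp
  obtain m where n: "n = Suc (Suc m)" using \<open>n \<ge> 2\<close> by (metis add_2_eq_Suc le_Suc_ex)
  have "x (n - 1) \<in> C"
    unfolding n using assms(11) metric_proj_closest(1)[OF assms(1-3)] by simp
  moreover have "x n = metric_proj C (x (n - 1) - lam *\<^sub>R F (y (n - 1)))"
    and "y n = 2 *\<^sub>R x n - x (n - 1)"
    unfolding n using assms(11,12) by simp_all
  ultimately show ?thesis
    using projected_reflected_gradient_step[OF assms(1-4,6) _ \<open>z \<in> C\<close>] assms(9,11) by simp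
qed

end
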